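(* Let $G=(V,E)$ be a graph with a linear order $<$ on $E$, let $\bar{x}=(x_1,\dots,x_{|V|})$, and define $$U'(G,\bar{x},y)=\sum_{A\subseteq E}\prod_{i=1}^{|V|}x_i^{k_i((V,A))}\,y^{|A|}.$$ Then $$U'(G,\bar{x},y)=\sum_{F=(V,A_f)\in\mathcal{F}(G)}\ \sum_{A_i\subseteq E_i(F,G,<)}\ \prod_{j=1}^{|V|}x_j^{k_j((V,A_f\setminus A_i))}\,y^{|A_f\setminus A_i|}\,(1+y)^{e(F,G,<)}.$$
   Context: A graph $G=(V,E)$ consists of a finite nonempty vertex set $V$ and a finite set $E$ of edges. Each edge has as its set of endpoints a 1- or 2-element subset of $V$, so loops and parallel edges are allowed. $(V,A)$ is the spanning subgraph with edge set $A\subseteq E$. $k(H)$ is the number of connected components of $H$, and $k_i(H)$ is the number of connected components of $H$ having exactly $i$ vertices. $F_{-e+f}$ denotes $F$ with edge $e$ deleted and edge $f$ added. A spanning forest of $G$ is a spanning subgraph $F=(V,A)$ which is a forest (no cycles, no loops) with $k(F)=k(G)$; $\mathcal{F}(G)$ is the set of spanning forests. For a linear order $<$ on $E$ and $F=(V,A_f)\in\mathcal{F}(G)$: $e\in A_f$ is internally active if there is no $f\in E\setminus A_f$ with $e<f$ and $F_{-e+f}\in\mathcal{F}(G)$; the set of these is $E_i(F,G,<)$. $f\in E\setminus A_f$ is externally active if there is no $e\in A_f$ with $f<e$ and $F_{-e+f}\in\mathcal{F}(G)$; $e(F,G,<)$ is the number of externally active edges. *)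

theory Defs
  imports Main
begin

text \<open>A graph is given by a vertex set V, an edge set E and an endpoint map
  ends :: 'e => 'v set (each edge has a 1- or 2-element set of endpoints;
  loops and parallel edges are allowed).\<close>

definition is_graph :: "'v set \<Rightarrow> 'e set \<Rightarrow> ('e \<Rightarrow> 'v set) \<Rightarrow> bool" where
  "is_graph V E ends \<longleftrightarrow> finite V \<and> V \<noteq> {} \<and> finite E \<and>
     (\<forall>e\<in>E. ends e \<subseteq> V \<and> (card (ends e) = 1 \<or> card (ends e) = 2))"

definition conn :: "('e \<Rightarrow> 'v set) \<Rightarrow> 'e set \<Rightarrow> ('v \<times> 'v) set" where
  "conn ends A = (\<Union>e\<in>A. {(u,v). u \<in> ends e \<and> v \<in> ends e})\<^sup>*"

definition comps :: "'v set \<Rightarrow> ('e \<Rightarrow> 'v set) \<Rightarrow> 'e set \<Rightarrow> 'v set set" where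
  "comps V ends A = V // conn ends A"

definition ncomp :: "'v set \<Rightarrow> ('e \<Rightarrow> 'v set) \<Rightarrow> 'e set \<Rightarrow> nat" where
  "ncomp V ends A = card (comps V ends A)"

definition ncomp_size :: "'v set \<Rightarrow> ('e \<Rightarrow> 'v set) \<Rightarrow> 'e set \<Rightarrow> nat \<Rightarrow> nat" where
  "ncomp_size V ends A i = card {C \<in> comps V ends A. card C = i}"

text \<open>Length 1 cycles are
  loops, length 2 cycles are pairs of parallel edges.\<close>
definition has_cycle :: "('e \<Rightarrow> 'v set) \<Rightarrow> 'e set \<Rightarrow> bool" where
  "has_cycle ends A \<longleftrightarrow> (\<exists>es vs. es \<noteq> [] \<and> length vs = length es \<and> distinct es \<and>
      distinct vs \<and> set es \<subseteq> A \<and>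
      (\<forall>i<length es. ends (es ! i) = {vs ! i, vs ! ((i + 1) mod length es)}))"

definition spanning_forest :: "'v set \<Rightarrow> 'e set \<Rightarrow> ('e \<Rightarrow> 'v set) \<Rightarrow> 'e set \<Rightarrow> bool" where
  "spanning_forest V E ends A \<longleftrightarrow> A \<subseteq> E \<and> \<not> has_cycle ends A \<and>
     ncomp V ends A = ncomp V ends E"

definition swap_edge :: "'e set \<Rightarrow> 'e \<Rightarrow> 'e \<Rightarrow> 'e set" where
  "swap_edge A e f = insert f (A - {e})"

definition int_active :: "'v set \<Rightarrow> 'e set \<Rightarrow> ('e \<Rightarrow> 'v set) \<Rightarrow> 'e rel \<Rightarrow> 'e set \<Rightarrow> 'e set" where
  "int_active V E ends lt A = {e \<in> A. \<not> (\<exists>f \<in> E - A. (e, f) \<in> lt \<and>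
       spanning_forest V E ends (swap_edge A e f))}"

definition ext_active :: "'v set \<Rightarrow> 'e set \<Rightarrow> ('e \<Rightarrow> 'v set) \<Rightarrow> 'e rel \<Rightarrow> 'e set \<Rightarrow> 'e set" where
  "ext_active V E ends lt A = {f \<in> E - A. \<not> (\<exists>e \<in> A. (f, e) \<in> lt \<and>
       spanning_forest V E ends (swap_edge A e f))}"

definition n_ext_active :: "'v set \<Rightarrow> 'e set \<Rightarrow> ('e \<Rightarrow> 'v set) \<Rightarrow> 'e rel \<Rightarrow> 'e set \<Rightarrow> nat" where
  "n_ext_active V E ends lt A = card (ext_active V E ends lt A)"

definition U' :: "'v set \<Rightarrow> 'e set \<Rightarrow> ('e \<Rightarrow> 'v set) \<Rightarrow> (nat \<Rightarrow> 'a::comm_ring_1) \<Rightarrow> 'a \<Rightarrow> 'a" where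
  "U' V E ends x y = (\<Sum>A\<in>Pow E. (\<Prod>i=1..card V. x i ^ ncomp_size V ends A i) * y ^ card A)"

end

theory Submission
  imports Defs "HOL-Library.Transitive_Closure_Table"
begin

text \<open>
  The identity is an instance of Crapo's interval decomposition of the Boolean lattice of
  edge sets.  For a spanning forest F with internally active edges I(F) and externally active
  edges X(F), the intervals [F - I(F), F \<union> X(F)] partition the power set of E: every
  A \<subseteq> E is (F - Ai) \<union> Ae for exactly one triple with Ai \<subseteq> I(F) and Ae \<subseteq> X(F).
  Moreover every externally active edge joins two vertices already connected in F - I(F), so
  adding the edges of Ae changes neither the components nor their sizes; the summand of U'
  at (F - Ai) \<union> Ae is therefore the summand at F - Ai times y^|Ae|, and summing over Ae
  produces the factor (1 + y)^e(F).
\<close>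

definition spanned :: "('e \<Rightarrow> 'v set) \<Rightarrow> 'e set \<Rightarrow> 'e \<Rightarrow> bool" where
  "spanned ends B e \<longleftrightarrow> (\<forall>u\<in>ends e. \<forall>v\<in>ends e. (u, v) \<in> conn ends B)"

lemma conn_equiv: "equiv UNIV (conn ends A)"
  unfolding conn_def by (intro equivI refl_rtrancl sym_rtrancl trans_rtrancl) (auto simp: sym_def)

lemma conn_refl [simp]: "(u, u) \<in> conn ends A"
  unfolding conn_def by simp

lemma conn_sym: "(u, v) \<in> conn ends A \<Longrightarrow> (v, u) \<in> conn ends A"
  using conn_equiv by (metis equivE symD)

lemma conn_trans: "(u, v) \<in> conn ends A \<Longrightarrow> (v, w) \<in> conn ends A \<Longrightarrow> (u, w) \<in> conn ends A"
  unfolding conn_def by (rule rtrancl_trans)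

lemma conn_mono: "A \<subseteq> B \<Longrightarrow> conn ends A \<subseteq> conn ends B"
  unfolding conn_def by (rule rtrancl_mono) blast

lemma conn_edge: "e \<in> A \<Longrightarrow> u \<in> ends e \<Longrightarrow> v \<in> ends e \<Longrightarrow> (u, v) \<in> conn ends A"
  unfolding conn_def by blast

lemma spanned_edge: "e \<in> A \<Longrightarrow> spanned ends A e"
  unfolding spanned_def by (blast intro: conn_edge)

lemma spanned_conn_mono: "spanned ends A e \<Longrightarrow> conn ends A \<subseteq> conn ends B \<Longrightarrow> spanned ends B e"
  unfolding spanned_def by blast

lemma spanned_pair: "ends e = {p, q} \<Longrightarrow> (p, q) \<in> conn ends B \<Longrightarrow> spanned ends B e"
  unfolding spanned_def using conn_sym by fastforce

lemma conn_subset_if_spanned: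
  assumes "\<And>e. e \<in> A \<Longrightarrow> spanned ends B e"
  shows "conn ends A \<subseteq> conn ends B"
proof -
  have "(\<Union>e\<in>A. {(u, v). u \<in> ends e \<and> v \<in> ends e}) \<subseteq> conn ends B"
    using assms unfolding spanned_def by blast
  then have "(\<Union>e\<in>A. {(u, v). u \<in> ends e \<and> v \<in> ends e})\<^sup>* \<subseteq> (conn ends B)\<^sup>*"
    by (rule rtrancl_mono)
  then show ?thesis by (simp add: conn_def)
qed

text \<open>A walk using the extra edge f can be cut at its first and last use of f.\<close>

lemma conn_insert:
  assumes "(u, w) \<in> conn ends (insert f B)"
  shows "(u, w) \<in> conn ends B \<or>
    (\<exists>p\<in>ends f. \<exists>q\<in>ends f. (u, p) \<in> conn ends B \<and> (q, w) \<in> conn ends B)"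
proof -
  have "(u, w) \<in> (\<Union>e\<in>insert f B. {(u, v). u \<in> ends e \<and> v \<in> ends e})\<^sup>*"
    using assms by (simp add: conn_def)
  then show ?thesis
  proof (induction rule: rtrancl_induct)
    case base
    show ?case by simp
  next
    case (step z w)
    then have "(z, w) \<in> conn ends B \<or> (z \<in> ends f \<and> w \<in> ends f)"
      by (auto intro: conn_edge)
    with step.IH show ?case
      by (meson conn_refl conn_trans)
  qed
qed

lemma conn_chain:
  assumes "\<And>i. i < m \<Longrightarrow> (w i, w (Suc i)) \<in> conn ends B"
  shows "(w 0, w m) \<in> conn ends B"
  using assms by (induction m) (auto intro: conn_trans)

text \<open>Strictly coarsening an equivalence on a finite set strictly decreases the number of classes.
  This turns "fewer components" into "some edge is not spanned".\<close>

lemma card_quotient_refine_less: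
  assumes "finite V" and r: "equiv UNIV r" and s: "equiv UNIV s" and "r \<subseteq> s"
    and "u \<in> V" "v \<in> V" "(u, v) \<in> s" "(u, v) \<notin> r"
  shows "card (V // s) < card (V // r)"
proof -
  have quot: "W // t = (\<lambda>x. t `` {x}) ` W" for W :: "'a set" and t
    unfolding quotient_def by blast
  have img: "(\<lambda>X. s `` X) ` (V // r) = V // s"
    unfolding quot image_image refines_equiv_class_eq2[OF assms(4) r s] ..
  have "r `` {u} \<noteq> r `` {v}"
    using assms(8) eq_equiv_class_iff[OF r] by blast
  moreover have "s `` (r `` {u}) = s `` (r `` {v})"
    unfolding refines_equiv_class_eq2[OF assms(4) r s]
    using assms(7) eq_equiv_class_iff[OF s] by blast
  ultimately have "\<not> inj_on (\<lambda>X. s `` X) (V // r)"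
    using assms(5,6) unfolding inj_on_def quot by blast
  moreover have "finite (V // r)"
    using assms(1) unfolding quot by simp
  ultimately show ?thesis
    unfolding img[symmetric] using card_image_le inj_on_iff_eq_card le_neq_implies_less by metis
qed

definition indep :: "('e \<Rightarrow> 'v set) \<Rightarrow> 'e set \<Rightarrow> bool" where
  "indep ends F \<longleftrightarrow> (\<forall>e\<in>F. \<not> spanned ends (F - {e}) e)"

text \<open>The first edge of a cycle is spanned by the rest of the cycle.\<close>

lemma cycle_not_indep:
  assumes "has_cycle ends F"
  shows "\<not> indep ends F"
proof -
  obtain es vs where es: "es \<noteq> []" "distinct es" "set es \<subseteq> F"
    and ends_es: "\<And>i. i < length es \<Longrightarrow> ends (es ! i) = {vs ! i, vs ! ((i + 1) mod length es)}"
    using assms unfolding has_cycle_def by blast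
  define n where "n = length es"
  define w where "w i = vs ! (Suc i mod n)" for i
  have n: "n > 0" using es(1) by (simp add: n_def)
  have "(w i, w (Suc i)) \<in> conn ends (F - {es ! 0})" if i: "i < n - 1" for i
  proof (rule conn_edge)
    show "es ! Suc i \<in> F - {es ! 0}"
      using es(1,3) i nth_eq_iff_index_eq[OF es(2), of "Suc i" 0] by (auto simp: n_def)
    show "w i \<in> ends (es ! Suc i)" "w (Suc i) \<in> ends (es ! Suc i)"
      using ends_es[of "Suc i"] i by (simp_all add: w_def n_def)
  qed
  then have "(w 0, w (n - 1)) \<in> conn ends (F - {es ! 0})"
    by (rule conn_chain)
  then have "(vs ! 0, vs ! (1 mod n)) \<in> conn ends (F - {es ! 0})"
    using n by (auto simp: w_def intro: conn_sym)
  then have "spanned ends (F - {es ! 0}) (es ! 0)"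
    using ends_es[of 0] n by (intro spanned_pair) (simp_all add: n_def)
  moreover have "es ! 0 \<in> F" using es(1,3) by auto
  ultimately show ?thesis unfolding indep_def by blast
qed

lemma walk_edges_distinct:
  assumes vs: "distinct vs" and len: "length vs = Suc (length ds)"
    and ends_ds: "\<And>i. i < length ds \<Longrightarrow> ends (ds ! i) = {vs ! i, vs ! Suc i}"
  shows "distinct ds"
  unfolding distinct_conv_nth
proof (intro allI impI notI)
  fix i j assume ij: "i < length ds" "j < length ds" "i \<noteq> j" and eq: "ds ! i = ds ! j"
  have "{vs ! i, vs ! Suc i} = {vs ! j, vs ! Suc j}"
    using ends_ds[OF ij(1)] ends_ds[OF ij(2)] eq by simp
  moreover have "vs ! i \<noteq> vs ! j"
    using nth_eq_iff_index_eq[OF vs] ij len by simp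
  ultimately have "vs ! i = vs ! Suc j" "vs ! j = vs ! Suc i"
    by (auto simp: doubleton_eq_iff)
  then have "i = Suc j" "j = Suc i"
    using nth_eq_iff_index_eq[OF vs] ij len by simp_all
  then show False by simp
qed

locale multigraph =
  fixes V :: "'v set" and E :: "'e set" and ends :: "'e \<Rightarrow> 'v set"
  assumes is_graph: "is_graph V E ends"
begin

lemma finite_V: "finite V" and finite_E: "finite E"
  and ends_subset: "e \<in> E \<Longrightarrow> ends e \<subseteq> V"
  and ends_card: "e \<in> E \<Longrightarrow> card (ends e) = 1 \<or> card (ends e) = 2"
  using is_graph unfolding is_graph_def by auto

text \<open>An edge has at most two endpoints, so two distinct ones are all of them.\<close>

lemma ends_eq_pair:
  assumes "e \<in> E" "p \<in> ends e" "q \<in> ends e" "p \<noteq> q"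
  shows "ends e = {p, q}"
proof (rule card_seteq[symmetric])
  show "finite (ends e)" "card (ends e) \<le> card {p, q}"
    using ends_card[OF assms(1)] assms(4) by (auto intro: card_ge_0_finite)
  show "{p, q} \<subseteq> ends e" using assms(2,3) by blast
qed

lemma cut_edge_spanned:
  assumes "f \<in> E" and uv: "(u, v) \<in> conn ends (insert f B)" "(u, v) \<notin> conn ends B"
    and BC: "B \<subseteq> C" and "(u, v) \<in> conn ends C"
  shows "spanned ends C f"
proof -
  obtain p q where pq: "p \<in> ends f" "q \<in> ends f" "(u, p) \<in> conn ends B" "(q, v) \<in> conn ends B"
    using conn_insert[OF uv(1)] uv(2) by blast
  have "p \<noteq> q" using pq uv(2) conn_trans by metis
  then have "ends f = {p, q}" using ends_eq_pair assms(1) pq by blast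
  moreover have "(p, q) \<in> conn ends C"
    using pq assms(5) conn_mono[OF BC] by (meson conn_sym conn_trans subsetD)
  ultimately show ?thesis by (rule spanned_pair)
qed

definition spans :: "'e set \<Rightarrow> bool" where
  "spans F \<longleftrightarrow> (\<forall>e\<in>E. spanned ends F e)"

lemma spans_conn_eq:
  assumes "F \<subseteq> E" "spans F"
  shows "conn ends F = conn ends E"
  using conn_mono[OF assms(1)] conn_subset_if_spanned[of E ends F] assms(2)
  unfolding spans_def by blast

lemma ncomp_eq_iff_spans:
  assumes FE: "F \<subseteq> E"
  shows "ncomp V ends F = ncomp V ends E \<longleftrightarrow> spans F"
proof
  assume "spans F"
  then show "ncomp V ends F = ncomp V ends E"
    using spans_conn_eq[OF FE] by (simp add: ncomp_def comps_def)
next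
  assume eq: "ncomp V ends F = ncomp V ends E"
  show "spans F"
  proof (rule ccontr)
    assume "\<not> spans F"
    then obtain e u v where e: "e \<in> E" "u \<in> ends e" "v \<in> ends e" "(u, v) \<notin> conn ends F"
      unfolding spans_def spanned_def by blast
    then have "card (V // conn ends E) < card (V // conn ends F)"
      using ends_subset[OF e(1)]
      by (intro card_quotient_refine_less[OF finite_V conn_equiv conn_equiv conn_mono[OF FE]])
         (auto intro: conn_edge)
    with eq show False by (simp add: ncomp_def comps_def)
  qed
qed

lemma simple_path:
  assumes "B \<subseteq> E" and "(b, a) \<in> conn ends B"
  obtains vs ds where "length vs = Suc (length ds)" "distinct vs" "distinct ds" "set ds \<subseteq> B"
    "vs ! 0 = b" "vs ! length ds = a"
    "\<And>i. i < length ds \<Longrightarrow> ends (ds ! i) = {vs ! i, vs ! Suc i}"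
proof -
  let ?R = "\<lambda>x y. \<exists>d\<in>B. x \<in> ends d \<and> y \<in> ends d"
  have "(\<Union>e\<in>B. {(u, v). u \<in> ends e \<and> v \<in> ends e}) = {(x, y). ?R x y}" by blast
  then have "?R\<^sup>*\<^sup>* b a"
    using assms(2) by (simp add: conn_def rtranclp_rtrancl_eq)
  then obtain xs0 where "rtrancl_path ?R b xs0 a"
    by (auto simp: rtranclp_eq_rtrancl_path)
  then obtain xs where path: "rtrancl_path ?R b xs a" and dist: "distinct (b # xs)"
    by (rule rtrancl_path_distinct)
  define vs where "vs = b # xs"
  define m where "m = length xs"
  have "\<forall>i<m. \<exists>d. d \<in> B \<and> vs ! i \<in> ends d \<and> vs ! Suc i \<in> ends d"
    using rtrancl_path_nth[OF path] unfolding vs_def m_def by fastforce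
  then obtain d where d: "\<And>i. i < m \<Longrightarrow> d i \<in> B \<and> vs ! i \<in> ends (d i) \<and> vs ! Suc i \<in> ends (d i)"
    by metis
  define ds where "ds = map d [0..<m]"
  have len: "length vs = Suc (length ds)" by (simp add: vs_def ds_def m_def)
  have ends_ds: "ends (ds ! i) = {vs ! i, vs ! Suc i}" if "i < length ds" for i
  proof (rule ends_eq_pair)
    show "ds ! i \<in> E" "vs ! i \<in> ends (ds ! i)" "vs ! Suc i \<in> ends (ds ! i)"
      using d[of i] that assms(1) by (auto simp: ds_def)
    show "vs ! i \<noteq> vs ! Suc i"
      using nth_eq_iff_index_eq[OF dist, of i "Suc i"] that by (simp add: vs_def ds_def m_def)
  qed
  have "last vs = a"
    using path by (cases xs) (auto simp: vs_def rtrancl_path_last elim: rtrancl_path.cases)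
  moreover have "vs \<noteq> []" by (simp add: vs_def)
  ultimately have "vs ! length ds = a"
    using len by (metis last_conv_nth diff_Suc_1)
  moreover have "set ds \<subseteq> B" using d by (auto simp: ds_def)
  ultimately show ?thesis
    using that[OF len _ walk_edges_distinct[OF _ len ends_ds] _ _ _ ends_ds] dist
    by (simp add: vs_def)
qed

text \<open>An edge spanned by the other edges closes a cycle with a path joining its endpoints.\<close>

lemma not_indep_cycle:
  assumes FE: "F \<subseteq> E" and "\<not> indep ends F"
  shows "has_cycle ends F"
proof -
  obtain e where eF: "e \<in> F" and sp: "spanned ends (F - {e}) e"
    using assms(2) unfolding indep_def by blast
  have eE: "e \<in> E" using eF FE by blast
  show ?thesis
  proof (cases "card (ends e) = 1")
    case True
    then obtain w where "ends e = {w}" by (rule card_1_singletonE)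
    then show ?thesis
      unfolding has_cycle_def using eF by (intro exI[of _ "[e]"] exI[of _ "[w]"]) auto
  next
    case False
    then obtain a b where ab: "ends e = {a, b}" "a \<noteq> b"
      using ends_card[OF eE] by (meson card_2_iff)
    have "(b, a) \<in> conn ends (F - {e})" using sp ab unfolding spanned_def by blast
    then obtain vs ds where p: "length vs = Suc (length ds)" "distinct vs" "distinct ds"
      "set ds \<subseteq> F - {e}" "vs ! 0 = b" "vs ! length ds = a"
      and ends_ds: "\<And>i. i < length ds \<Longrightarrow> ends (ds ! i) = {vs ! i, vs ! Suc i}"
      using simple_path[of "F - {e}"] FE by blast
    have "ends ((ds @ [e]) ! i) = {vs ! i, vs ! ((i + 1) mod length (ds @ [e]))}"
      if "i < length (ds @ [e])" for i
    proof (cases "i < length ds")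
      case True
      then show ?thesis using ends_ds by (simp add: nth_append)
    next
      case False
      then have "i = length ds" using that by simp
      then show ?thesis using ab p(5,6) by (auto simp: nth_append)
    qed
    then show ?thesis
      unfolding has_cycle_def using p eF
      by (intro exI[of _ "ds @ [e]"] exI[of _ vs]) auto
  qed
qed

lemma spanning_forest_iff:
  "spanning_forest V E ends F \<longleftrightarrow> F \<subseteq> E \<and> indep ends F \<and> spans F"
  unfolding spanning_forest_def
  using cycle_not_indep not_indep_cycle ncomp_eq_iff_spans by blast

abbreviation sforest :: "'e set \<Rightarrow> bool" where
  "sforest F \<equiv> spanning_forest V E ends F"

lemma sforest_subset: "sforest F \<Longrightarrow> F \<subseteq> E"
  and sforest_indep: "sforest F \<Longrightarrow> indep ends F"
  and sforest_spans: "sforest F \<Longrightarrow> spans F"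
  using spanning_forest_iff by auto

lemma sforest_finite: "sforest F \<Longrightarrow> finite F"
  using sforest_subset finite_E finite_subset by blast

lemma finite_sforests: "finite {F. sforest F}"
  by (rule finite_subset[of _ "Pow E"]) (auto dest: sforest_subset simp: finite_E)

lemma swap_spans:
  assumes "F \<subseteq> E" "spans F" "e \<in> F" "f \<in> E" and sep: "\<not> spanned ends (F - {e}) f"
  shows "spans (insert f (F - {e}))"
proof -
  obtain c d where cd: "c \<in> ends f" "d \<in> ends f" "(c, d) \<notin> conn ends (F - {e})"
    using sep unfolding spanned_def by blast
  have "(c, d) \<in> conn ends (insert e (F - {e}))"
    using assms(2,3,4) cd(1,2) unfolding spans_def spanned_def by (simp add: insert_absorb)
  then have spanned_e: "spanned ends (insert f (F - {e})) e"
    using cd assms(1,3) by (intro cut_edge_spanned[of e c d "F - {e}"]) (auto intro: conn_edge)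
  have "conn ends F \<subseteq> conn ends (insert f (F - {e}))"
  proof (rule conn_subset_if_spanned)
    fix g assume "g \<in> F"
    then show "spanned ends (insert f (F - {e})) g"
      using spanned_e by (cases "g = e") (auto intro: spanned_edge)
  qed
  then show ?thesis
    using assms(2) unfolding spans_def by (blast intro: spanned_conn_mono)
qed

lemma swap_indep:
  assumes ind: "indep ends F" and "f \<in> E" "f \<notin> F" and sep: "\<not> spanned ends (F - {e}) f"
  shows "indep ends (insert f (F - {e}))"
  unfolding indep_def
proof (intro ballI notI)
  fix g assume g: "g \<in> insert f (F - {e})" and sp: "spanned ends (insert f (F - {e}) - {g}) g"
  show False
  proof (cases "g = f")
    case True
    then have "insert f (F - {e}) - {g} = F - {e}" using assms(3) by blast
    then show False using sp True sep by simp
  next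
    case False
    then have gF: "g \<in> F - {e}" using g by blast
    obtain u v where uv: "u \<in> ends g" "v \<in> ends g" "(u, v) \<notin> conn ends (F - {g})"
      using ind gF unfolding indep_def spanned_def by blast
    have "insert f (F - {e}) - {g} = insert f (F - {e} - {g})" using False by blast
    then have "(u, v) \<in> conn ends (insert f (F - {e} - {g}))"
      using sp uv unfolding spanned_def by simp
    moreover have "(u, v) \<notin> conn ends (F - {e} - {g})"
      using uv(3) conn_mono[of "F - {e} - {g}" "F - {g}" ends] by blast
    moreover have "(u, v) \<in> conn ends (F - {e})" using gF uv by (intro conn_edge)
    ultimately have "spanned ends (F - {e}) f"
      using assms(2) by (intro cut_edge_spanned) auto
    then show False using sep by blast
  qed
qed

lemma swap_sforest:
  assumes F: "sforest F" and "e \<in> F" "f \<in> E" "f \<notin> F"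
    and sep: "\<not> spanned ends (F - {e}) f"
  shows "sforest (swap_edge F e f)"
  using swap_spans[OF sforest_subset[OF F] sforest_spans[OF F] assms(2,3) sep]
    swap_indep[OF sforest_indep[OF F] assms(3,4) sep] sforest_subset[OF F] assms(3)
  unfolding swap_edge_def spanning_forest_iff by blast

lemma essential_path:
  assumes FE: "F \<subseteq> E" and ind: "indep ends F" and ab: "(a, b) \<in> conn ends F"
  obtains P where "P \<subseteq> F" "(a, b) \<in> conn ends P"
    "\<And>h. h \<in> P \<Longrightarrow> (a, b) \<notin> conn ends (F - {h})"
proof -
  have "\<exists>P. (P \<subseteq> F \<and> (a, b) \<in> conn ends P) \<and>
      (\<forall>Q. Q \<subseteq> F \<and> (a, b) \<in> conn ends Q \<longrightarrow> card P \<le> card Q)"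
    by (rule ex_has_least_nat[of _ F]) (use ab in simp)
  then obtain P where PF: "P \<subseteq> F" and abP: "(a, b) \<in> conn ends P"
    and min: "\<forall>Q. Q \<subseteq> F \<and> (a, b) \<in> conn ends Q \<longrightarrow> card P \<le> card Q"
    by blast
  have "finite P" using finite_subset[OF PF] finite_subset[OF FE finite_E] .
  have "(a, b) \<notin> conn ends (F - {h})" if hP: "h \<in> P" for h
  proof
    assume abh: "(a, b) \<in> conn ends (F - {h})"
    have "(a, b) \<notin> conn ends (P - {h})"
    proof
      assume "(a, b) \<in> conn ends (P - {h})"
      then have "card P \<le> card (P - {h})" using min PF by blast
      moreover have "card (P - {h}) < card P" using \<open>finite P\<close> hP by (rule card_Diff1_less)
      ultimately show False by simp
    qed
    moreover have "(a, b) \<in> conn ends (insert h (P - {h}))"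
      using abP hP by (simp add: insert_absorb)
    moreover have "h \<in> E" "P - {h} \<subseteq> F - {h}" using hP PF FE by auto
    ultimately have "spanned ends (F - {h}) h"
      using abh cut_edge_spanned[of h a b "P - {h}"] by blast
    then show False using ind hP PF unfolding indep_def by blast
  qed
  with PF abP show ?thesis by (rule that)
qed

lemma symmetric_exchange:
  assumes F1: "sforest F1" and F2: "sforest F2" and g: "g \<in> F1" "g \<notin> F2"
  obtains h where "h \<in> F2" "h \<notin> F1" "\<not> spanned ends (F1 - {g}) h" "\<not> spanned ends (F2 - {h}) g"
proof -
  have gE: "g \<in> E" using g F1 sforest_subset by blast
  obtain a b where ab: "a \<in> ends g" "b \<in> ends g" "(a, b) \<notin> conn ends (F1 - {g})"
    using sforest_indep[OF F1] g unfolding indep_def spanned_def by blast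
  have "(a, b) \<in> conn ends F2"
    using sforest_spans[OF F2] gE ab unfolding spans_def spanned_def by blast
  then obtain P where P: "P \<subseteq> F2" "(a, b) \<in> conn ends P"
    and essential: "\<And>h. h \<in> P \<Longrightarrow> (a, b) \<notin> conn ends (F2 - {h})"
    by (rule essential_path[OF sforest_subset[OF F2] sforest_indep[OF F2]]) blast
  have "\<not> conn ends P \<subseteq> conn ends (F1 - {g})" using P ab(3) by blast
  then obtain h where h: "h \<in> P" "\<not> spanned ends (F1 - {g}) h"
    using conn_subset_if_spanned[of P ends "F1 - {g}"] by blast
  have "h \<notin> F1"
    using h g P spanned_edge[of h "F1 - {g}" ends] by blast
  moreover have "\<not> spanned ends (F2 - {h}) g"
    using essential[OF h(1)] ab(1,2) unfolding spanned_def by blast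
  ultimately show ?thesis using h P by (intro that) auto
qed

text \<open>Every graph has a spanning forest: a spanning subset of E of minimal size.\<close>

lemma sforest_exists: "\<exists>F. sforest F"
proof -
  have "spans E" unfolding spans_def by (blast intro: spanned_edge)
  then have "\<exists>P. (P \<subseteq> E \<and> spans P) \<and> (\<forall>Q. Q \<subseteq> E \<and> spans Q \<longrightarrow> card P \<le> card Q)"
    by (intro ex_has_least_nat[of _ E]) simp
  then obtain P where PE: "P \<subseteq> E" and spans_P: "spans P"
    and min: "\<forall>Q. Q \<subseteq> E \<and> spans Q \<longrightarrow> card P \<le> card Q"
    by blast
  have "indep ends P"
    unfolding indep_def
  proof (intro ballI notI)
    fix e assume e: "e \<in> P" "spanned ends (P - {e}) e"
    have "conn ends P \<subseteq> conn ends (P - {e})"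
    proof (rule conn_subset_if_spanned)
      fix g assume "g \<in> P"
      then show "spanned ends (P - {e}) g"
        using e(2) by (cases "g = e") (auto intro: spanned_edge)
    qed
    then have "spans (P - {e})"
      using spans_P unfolding spans_def by (blast intro: spanned_conn_mono)
    then have "card P \<le> card (P - {e})" using min PE by blast
    moreover have "card (P - {e}) < card P"
      using finite_subset[OF PE finite_E] e(1) by (rule card_Diff1_less)
    ultimately show False by simp
  qed
  then have "sforest P" using PE spans_P by (simp add: spanning_forest_iff)
  then show ?thesis ..
qed

end

lemma sum_swap_edge:
  fixes w :: "'e \<Rightarrow> 'a::ab_group_add"
  assumes "finite F" "e \<in> F" "f \<notin> F"
  shows "sum w (swap_edge F e f) = sum w F - w e + w f"
  using assms by (simp add: swap_edge_def sum_diff1 algebra_simps)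

lemma one_plus_power_card:
  fixes y :: "'a::comm_semiring_1"
  assumes "finite S"
  shows "(1 + y) ^ card S = (\<Sum>T\<in>Pow S. y ^ card T)"
proof -
  have "(1 + y) ^ card S = (\<Prod>s\<in>S. y + 1)" by (simp add: add.commute)
  also have "\<dots> = (\<Sum>T\<in>Pow S. (\<Prod>s\<in>T. y) * (\<Prod>s\<in>S - T. 1))"
    by (rule prod_add[OF assms])
  also have "\<dots> = (\<Sum>T\<in>Pow S. y ^ card T)" by simp
  finally show ?thesis .
qed

definition U'_term :: "'v set \<Rightarrow> ('e \<Rightarrow> 'v set) \<Rightarrow> (nat \<Rightarrow> 'a::comm_semiring_1) \<Rightarrow> 'a \<Rightarrow> 'e set \<Rightarrow> 'a"
  where "U'_term V ends x y A = (\<Prod>i=1..card V. x i ^ ncomp_size V ends A i) * y ^ card A"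

lemma U'_eq_sum_U'_term: "U' V E ends x y = (\<Sum>A\<in>Pow E. U'_term V ends x y A)"
  by (simp add: U'_def U'_term_def)

locale ordered_multigraph = multigraph V E ends
  for V :: "'v set" and E :: "'e set" and ends :: "'e \<Rightarrow> 'v set" +
  fixes lt :: "'e rel"
  assumes order: "strict_linear_order_on E lt" and lt_on_E: "lt \<subseteq> E \<times> E"
begin

lemma lt_irrefl: "(e, e) \<notin> lt"
  using order unfolding strict_linear_order_on_def irrefl_def by blast

lemma lt_trans: "(a, b) \<in> lt \<Longrightarrow> (b, c) \<in> lt \<Longrightarrow> (a, c) \<in> lt"
  using order unfolding strict_linear_order_on_def trans_def by blast

lemma lt_total: "a \<in> E \<Longrightarrow> b \<in> E \<Longrightarrow> a \<noteq> b \<Longrightarrow> (a, b) \<in> lt \<or> (b, a) \<in> lt"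
  using order unfolding strict_linear_order_on_def total_on_def by blast

definition rank :: "'e \<Rightarrow> nat" where
  "rank e = card {d \<in> E. (d, e) \<in> lt}"

lemma rank_less: "(e, f) \<in> lt \<Longrightarrow> rank e < rank f"
proof -
  assume ef: "(e, f) \<in> lt"
  have "{d \<in> E. (d, e) \<in> lt} \<subset> {d \<in> E. (d, f) \<in> lt}"
    using ef lt_on_E lt_trans lt_irrefl by blast
  then show ?thesis
    unfolding rank_def by (rule psubset_card_mono[rotated]) (simp add: finite_E)
qed

lemma rank_bound: "e \<in> E \<Longrightarrow> rank e < card E"
  unfolding rank_def using lt_irrefl finite_E by (intro psubset_card_mono) auto

lemma greatest_edge:
  assumes "D \<subseteq> E" "D \<noteq> {}"
  obtains g where "g \<in> D" "\<And>h. h \<in> D \<Longrightarrow> h \<noteq> g \<Longrightarrow> (h, g) \<in> lt"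
proof -
  have fin: "finite (rank ` D)" using finite_subset[OF assms(1) finite_E] by simp
  have "Max (rank ` D) \<in> rank ` D" using Max_in[OF fin] assms(2) by blast
  then obtain g where g: "g \<in> D" "rank g = Max (rank ` D)" by (metis imageE)
  have "(h, g) \<in> lt" if h: "h \<in> D" "h \<noteq> g" for h
  proof -
    have "rank h \<le> rank g" using Max_ge[OF fin] h(1) g(2) by simp
    then have "(g, h) \<notin> lt" using rank_less leD by blast
    then show ?thesis using lt_total h g(1) assms(1) by blast
  qed
  with g(1) show ?thesis by (rule that)
qed

abbreviation int_act :: "'e set \<Rightarrow> 'e set" where
  "int_act F \<equiv> int_active V E ends lt F"

abbreviation ext_act :: "'e set \<Rightarrow> 'e set" where
  "ext_act F \<equiv> ext_active V E ends lt F"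

lemma int_act_subset: "int_act F \<subseteq> F"
  unfolding int_active_def by blast

lemma ext_act_subset: "ext_act F \<subseteq> E - F"
  unfolding ext_active_def by blast

lemma finite_ext_act: "finite (ext_act F)"
  using finite_subset[OF ext_act_subset] finite_E by blast

text \<open>Every externally active edge is spanned by the forest without its internally active edges:
  an internally active edge on the path joining its endpoints would be exchangeable with it.\<close>

lemma ext_active_spanned:
  assumes F: "sforest F" and f: "f \<in> ext_act F"
  shows "spanned ends (F - int_act F) f"
  unfolding spanned_def
proof (intro ballI)
  fix u v assume uv: "u \<in> ends f" "v \<in> ends f"
  have fE: "f \<in> E" and fF: "f \<notin> F" using f ext_act_subset by auto
  have "(u, v) \<in> conn ends F"
    using sforest_spans[OF F] fE uv unfolding spans_def spanned_def by blast
  then obtain P where PF: "P \<subseteq> F" and uvP: "(u, v) \<in> conn ends P"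
    and essential: "\<And>h. h \<in> P \<Longrightarrow> (u, v) \<notin> conn ends (F - {h})"
    by (rule essential_path[OF sforest_subset[OF F] sforest_indep[OF F]]) blast
  have "h \<notin> int_act F" if hP: "h \<in> P" for h
  proof
    assume hI: "h \<in> int_act F"
    have hF: "h \<in> F" using hP PF by blast
    have "\<not> spanned ends (F - {h}) f"
      using essential[OF hP] uv unfolding spanned_def by blast
    then have swap: "sforest (swap_edge F h f)" by (rule swap_sforest[OF F hF fE fF])
    then have "(h, f) \<notin> lt" using hI fE fF unfolding int_active_def by blast
    moreover have "(f, h) \<notin> lt" using f swap hF unfolding ext_active_def by blast
    moreover have "h \<in> E" using hF sforest_subset[OF F] by blast
    ultimately show False using lt_total fE hF fF by blast
  qed
  then have "P \<subseteq> F - int_act F" using PF by blast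
  then show "(u, v) \<in> conn ends (F - int_act F)" using uvP conn_mono by blast
qed

lemma conn_interval:
  assumes F: "sforest F" and Ai: "Ai \<subseteq> int_act F" and Ae: "Ae \<subseteq> ext_act F"
  shows "conn ends ((F - Ai) \<union> Ae) = conn ends (F - Ai)"
proof
  show "conn ends (F - Ai) \<subseteq> conn ends ((F - Ai) \<union> Ae)" by (rule conn_mono) blast
  show "conn ends ((F - Ai) \<union> Ae) \<subseteq> conn ends (F - Ai)"
  proof (rule conn_subset_if_spanned)
    fix g assume "g \<in> (F - Ai) \<union> Ae"
    then show "spanned ends (F - Ai) g"
    proof
      assume "g \<in> F - Ai"
      then show ?thesis by (rule spanned_edge)
    next
      assume "g \<in> Ae"
      then have "spanned ends (F - int_act F) g" using ext_active_spanned[OF F] Ae by blast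
      moreover have "conn ends (F - int_act F) \<subseteq> conn ends (F - Ai)"
        using Ai by (intro conn_mono) blast
      ultimately show ?thesis by (rule spanned_conn_mono)
    qed
  qed
qed

definition interval :: "'e set \<Rightarrow> 'e set set" where
  "interval F = {A. F - int_act F \<subseteq> A \<and> A \<subseteq> F \<union> ext_act F}"

lemma interval_coordinates:
  assumes "Ai \<subseteq> int_act F" "Ae \<subseteq> ext_act F"
  shows "F - ((F - Ai) \<union> Ae) = Ai" "((F - Ai) \<union> Ae) - F = Ae" "(F - Ai) \<union> Ae \<in> interval F"
  using assms int_act_subset[of F] ext_act_subset[of F] unfolding interval_def by auto

text \<open>Two forests whose intervals meet cannot differ: the greatest edge g of their symmetric
  difference, exchanged against a partner h, would contradict the activity of h.\<close>

lemma symdiff_greatest_absurd: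
  assumes F1: "sforest F1" and F2: "sforest F2"
    and A: "A \<in> interval F1" "A \<in> interval F2" and g: "g \<in> F1" "g \<notin> F2"
    and greatest: "\<And>h. h \<in> (F1 - F2) \<union> (F2 - F1) \<Longrightarrow> h \<noteq> g \<Longrightarrow> (h, g) \<in> lt"
  shows False
proof -
  obtain h where h: "h \<in> F2" "h \<notin> F1" "\<not> spanned ends (F1 - {g}) h" "\<not> spanned ends (F2 - {h}) g"
    by (rule symmetric_exchange[OF F1 F2 g])
  have gE: "g \<in> E" and hE: "h \<in> E" using g h F1 F2 sforest_subset by blast+
  have hg: "(h, g) \<in> lt" using greatest h(1,2) g(1) by blast
  show False
  proof (cases "h \<in> A")
    case True
    then have "h \<in> ext_act F1" using A(1) h(2) unfolding interval_def by blast
    moreover have "sforest (swap_edge F1 g h)" by (rule swap_sforest[OF F1 g(1) hE h(2,3)])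
    ultimately show False using hg g(1) unfolding ext_active_def by blast
  next
    case False
    then have "h \<in> int_act F2" using A(2) h(1) unfolding interval_def by blast
    moreover have "sforest (swap_edge F2 h g)" by (rule swap_sforest[OF F2 h(1) gE g(2) h(4)])
    ultimately show False using hg g gE unfolding int_active_def by blast
  qed
qed

lemma interval_unique:
  assumes "sforest F1" "sforest F2" "A \<in> interval F1" "A \<in> interval F2"
  shows "F1 = F2"
proof (rule ccontr)
  assume "F1 \<noteq> F2"
  then have "(F1 - F2) \<union> (F2 - F1) \<noteq> {}" by blast
  with assms(1,2) have "(F1 - F2) \<union> (F2 - F1) \<subseteq> E" "(F1 - F2) \<union> (F2 - F1) \<noteq> {}"
    using sforest_subset by blast+
  then obtain g where g: "g \<in> (F1 - F2) \<union> (F2 - F1)"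
    and greatest: "\<And>h. h \<in> (F1 - F2) \<union> (F2 - F1) \<Longrightarrow> h \<noteq> g \<Longrightarrow> (h, g) \<in> lt"
    by (rule greatest_edge) blast
  show False
  proof (cases "g \<in> F1")
    case True
    show False
      by (rule symdiff_greatest_absurd[OF assms True]) (use g greatest True in auto)
  next
    case False
    show False
      by (rule symdiff_greatest_absurd[OF assms(2,1,4,3), of g]) (use g greatest False in auto)
  qed
qed

text \<open>A weight favouring edges outside A that are large and edges of A that are small; a
  forest of maximal total weight has A in its interval.\<close>

definition interval_weight :: "'e set \<Rightarrow> 'e \<Rightarrow> int" where
  "interval_weight A e = (if e \<in> A then 2 * int (card E) - int (rank e) else int (rank e))"

lemma weight_increase_internal:
  assumes "e \<notin> A" "(e, f) \<in> lt"
  shows "interval_weight A e < interval_weight A f"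
proof -
  have "rank e < card E" "rank f < card E" using assms(2) lt_on_E rank_bound by auto
  then show ?thesis using assms rank_less[OF assms(2)] by (auto simp: interval_weight_def)
qed

lemma weight_increase_external:
  assumes "f \<in> A" "(f, e) \<in> lt"
  shows "interval_weight A e < interval_weight A f"
proof -
  have "rank e < card E" "rank f < card E" using assms(2) lt_on_E rank_bound by auto
  then show ?thesis using assms rank_less[OF assms(2)] by (auto simp: interval_weight_def)
qed

lemma interval_exists:
  assumes AE: "A \<subseteq> E"
  obtains F where "sforest F" "A \<in> interval F"
proof -
  define \<Phi> where "\<Phi> F = (\<Sum>e\<in>F. interval_weight A e)" for F
  have fin: "finite (\<Phi> ` {F. sforest F})" and ne: "\<Phi> ` {F. sforest F} \<noteq> {}"
    using finite_sforests sforest_exists by auto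
  obtain F where F: "sforest F" and F_max: "\<Phi> F = Max (\<Phi> ` {F. sforest F})"
    using Max_in[OF fin ne] by auto
  have no_improving_swap: "\<not> sforest (swap_edge F e f)"
    if "e \<in> F" "f \<notin> F" "interval_weight A e < interval_weight A f" for e f
  proof
    assume "sforest (swap_edge F e f)"
    then have "\<Phi> (swap_edge F e f) \<le> \<Phi> F" using Max_ge[OF fin] F_max by simp
    moreover have "\<Phi> (swap_edge F e f) = \<Phi> F - interval_weight A e + interval_weight A f"
      unfolding \<Phi>_def using sforest_finite[OF F] that(1,2) by (rule sum_swap_edge)
    ultimately show False using that(3) by simp
  qed
  have "e \<in> int_act F" if "e \<in> F" "e \<notin> A" for e
    using that no_improving_swap weight_increase_internal unfolding int_active_def by blast
  moreover have "f \<in> ext_act F" if "f \<in> A" "f \<notin> F" for f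
    using that AE no_improving_swap weight_increase_external unfolding ext_active_def by blast
  ultimately have "A \<in> interval F" unfolding interval_def by blast
  with F show ?thesis by (rule that)
qed

lemma interval_partition:
  "bij_betw (\<lambda>(F, Ai, Ae). (F - Ai) \<union> Ae)
     (SIGMA F:{F. sforest F}. Pow (int_act F) \<times> Pow (ext_act F)) (Pow E)"
  (is "bij_betw ?join ?T _")
proof (rule bij_betwI')
  fix p q assume p: "p \<in> ?T" and q: "q \<in> ?T"
  obtain F1 Ai1 Ae1 F2 Ai2 Ae2 where pq: "p = (F1, Ai1, Ae1)" "q = (F2, Ai2, Ae2)"
    by (cases p, cases q) auto
  have F1: "sforest F1" "Ai1 \<subseteq> int_act F1" "Ae1 \<subseteq> ext_act F1" using p pq by auto
  have F2: "sforest F2" "Ai2 \<subseteq> int_act F2" "Ae2 \<subseteq> ext_act F2" using q pq by auto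
  show "(?join p = ?join q) = (p = q)"
  proof
    assume eq: "?join p = ?join q"
    then have "F1 = F2"
      using interval_unique[OF F1(1) F2(1)] interval_coordinates(3)[OF F1(2,3)]
        interval_coordinates(3)[OF F2(2,3)] pq by auto
    then show "p = q"
      using eq interval_coordinates(1,2)[OF F1(2,3)] interval_coordinates(1,2)[OF F2(2,3)] pq
      by auto
  qed simp
next
  fix p assume "p \<in> ?T"
  then show "?join p \<in> Pow E"
    using sforest_subset ext_act_subset by fastforce
next
  fix A assume "A \<in> Pow E"
  then obtain F where F: "sforest F" "A \<in> interval F"
    using interval_exists by blast
  then have "(F, F - A, A - F) \<in> ?T"
    unfolding interval_def by auto
  moreover have "A = ?join (F, F - A, A - F)" by auto
  ultimately show "\<exists>p\<in>?T. A = ?join p" by blast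
qed

lemma sum_Pow_by_intervals:
  fixes g :: "'e set \<Rightarrow> 'a::comm_monoid_add"
  shows "(\<Sum>A\<in>Pow E. g A) =
    (\<Sum>F\<in>{F. sforest F}. \<Sum>Ai\<in>Pow (int_act F). \<Sum>Ae\<in>Pow (ext_act F). g ((F - Ai) \<union> Ae))"
proof -
  have fin_int: "finite (int_act F)" if "sforest F" for F
    using sforest_finite[OF that] int_act_subset finite_subset by blast
  have "(\<Sum>A\<in>Pow E. g A) =
      (\<Sum>(F, Ai, Ae)\<in>(SIGMA F:{F. sforest F}. Pow (int_act F) \<times> Pow (ext_act F)). g ((F - Ai) \<union> Ae))"
    using sum.reindex_bij_betw[OF interval_partition, of g] by (simp add: case_prod_beta)
  also have "\<dots> = (\<Sum>F\<in>{F. sforest F}. \<Sum>(Ai, Ae)\<in>Pow (int_act F) \<times> Pow (ext_act F). g ((F - Ai) \<union> Ae))"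
    using finite_sforests fin_int finite_ext_act by (subst sum.Sigma) (auto simp: case_prod_beta)
  also have "\<dots> = (\<Sum>F\<in>{F. sforest F}. \<Sum>Ai\<in>Pow (int_act F). \<Sum>Ae\<in>Pow (ext_act F). g ((F - Ai) \<union> Ae))"
    by (simp add: sum.cartesian_product)
  finally show ?thesis .
qed

lemma U'_term_add_ext_active:
  assumes "sforest F" "Ai \<subseteq> int_act F" "Ae \<subseteq> ext_act F"
  shows "U'_term V ends x y ((F - Ai) \<union> Ae) = U'_term V ends x y (F - Ai) * y ^ card Ae"
proof -
  have "ncomp_size V ends ((F - Ai) \<union> Ae) = ncomp_size V ends (F - Ai)"
    using conn_interval[OF assms] by (simp add: fun_eq_iff ncomp_size_def comps_def)
  moreover have "card ((F - Ai) \<union> Ae) = card (F - Ai) + card Ae"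
  proof (rule card_Un_disjoint)
    show "finite (F - Ai)" using sforest_finite[OF assms(1)] by simp
    show "finite Ae" using assms(3) finite_ext_act by (rule finite_subset)
    show "(F - Ai) \<inter> Ae = {}" using assms(3) ext_act_subset by blast
  qed
  ultimately show ?thesis by (simp add: U'_term_def power_add mult.assoc)
qed

lemma U'_term_times_activity_power:
  assumes "sforest F" "Ai \<subseteq> int_act F"
  shows "U'_term V ends x y (F - Ai) * (1 + y) ^ n_ext_active V E ends lt F =
    (\<Sum>Ae\<in>Pow (ext_act F). U'_term V ends x y ((F - Ai) \<union> Ae))"
proof -
  have "U'_term V ends x y (F - Ai) * (1 + y) ^ n_ext_active V E ends lt F =
      (\<Sum>Ae\<in>Pow (ext_act F). U'_term V ends x y (F - Ai) * y ^ card Ae)"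
    by (simp add: n_ext_active_def one_plus_power_card[OF finite_ext_act] sum_distrib_left)
  also have "\<dots> = (\<Sum>Ae\<in>Pow (ext_act F). U'_term V ends x y ((F - Ai) \<union> Ae))"
  proof (rule sum.cong[OF refl])
    fix Ae assume "Ae \<in> Pow (ext_act F)"
    then show "U'_term V ends x y (F - Ai) * y ^ card Ae = U'_term V ends x y ((F - Ai) \<union> Ae)"
      using U'_term_add_ext_active[OF assms, of Ae x y] by simp
  qed
  finally show ?thesis .
qed

lemma U'_activity_expansion:
  "U' V E ends x y =
    (\<Sum>F\<in>{F. sforest F}. \<Sum>Ai\<in>Pow (int_act F).
       U'_term V ends x y (F - Ai) * (1 + y) ^ n_ext_active V E ends lt F)"
proof -
  have "U' V E ends x y = (\<Sum>F\<in>{F. sforest F}. \<Sum>Ai\<in>Pow (int_act F).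
      \<Sum>Ae\<in>Pow (ext_act F). U'_term V ends x y ((F - Ai) \<union> Ae))"
    unfolding U'_eq_sum_U'_term by (rule sum_Pow_by_intervals)
  also have "\<dots> = (\<Sum>F\<in>{F. sforest F}. \<Sum>Ai\<in>Pow (int_act F).
      U'_term V ends x y (F - Ai) * (1 + y) ^ n_ext_active V E ends lt F)"
  proof (intro sum.cong refl)
    fix F Ai assume "F \<in> {F. sforest F}" "Ai \<in> Pow (int_act F)"
    then show "(\<Sum>Ae\<in>Pow (ext_act F). U'_term V ends x y ((F - Ai) \<union> Ae)) =
        U'_term V ends x y (F - Ai) * (1 + y) ^ n_ext_active V E ends lt F"
      using U'_term_times_activity_power[of F Ai x y] by simp
  qed
  finally show ?thesis .
qed

end

theorem theorem3p5:
  fixes V :: "'v set" and E :: "'e set" and ends :: "'e \<Rightarrow> 'v set"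
    and lt :: "'e rel" and x :: "nat \<Rightarrow> 'a::comm_ring_1" and y :: 'a
  assumes "is_graph V E ends"
    and "strict_linear_order_on E lt" and "lt \<subseteq> E \<times> E"
  shows "U' V E ends x y =
    (\<Sum>Af\<in>{A. spanning_forest V E ends A}.
       \<Sum>Ai\<in>Pow (int_active V E ends lt Af).
         (\<Prod>j=1..card V. x j ^ ncomp_size V ends (Af - Ai) j) * y ^ card (Af - Ai)
           * (1 + y) ^ n_ext_active V E ends lt Af)"
proof -
  interpret ordered_multigraph V E ends lt
    using assms by unfold_locales
  show ?thesis
    using U'_activity_expansion[of x y] by (simp add: U'_term_def)
qed

end
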